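(* Let $\ell\ge1$, $N=2^\ell$, $n_c,n_v\ge1$, ${\mathbf x}_{h,u}\in\mathbb{F}_2^\ell$ for $h\in\{0,\dots,n_c-1\}$, $u\in\{0,\dots,n_v-1\}$, and let $H$ be the block matrix whose $(h,u)$ block is $P_{{\mathbf x}_{h,u}}$. For $0\le h<i<j\le n_c-1$ and $m\in\{0,\dots,n_v-1\}$, let $\rho^{h,i,j}_m$ be the number of ordered pairs $(u,u')$ with $u,u'\in\{0,\dots,n_v-1\}\setminus\{m\}$, $u\ne u'$, and $${\mathbf x}_{h,u}+{\mathbf x}_{i,u}+{\mathbf x}_{i,m}={\mathbf x}_{h,u'}+{\mathbf x}_{j,u'}+{\mathbf x}_{j,m}.$$ Then the number of $6$-cycles in the Tanner graph of $H$ is $$\mathcal{N}_6=2^\ell\sum_{0\le h<i<j\le n_c-1}\ \sum_{m=0}^{n_v-1}\rho^{h,i,j}_m.$$ In particular, the Tanner graph of $H$ has no $6$-cycles if and only if all $\rho^{h,i,j}_m=0$.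
   Context: Rows and columns of $N\times N$ binary matrices are indexed by $\mathbb{F}_2^\ell$ via ${\mathbf x}=(x_1,\dots,x_\ell)\leftrightarrow 1+\sum_i x_i2^{i-1}$. For ${\mathbf a}\in\mathbb{F}_2^\ell$, $P_{\mathbf a}$ is the $N\times N$ binary matrix with $(P_{\mathbf a})_{{\mathbf x},{\mathbf y}}=1$ iff ${\mathbf y}={\mathbf x}+{\mathbf a}$. The Tanner graph of a binary matrix is the bipartite graph with check nodes = rows, variable nodes = columns, edges at the $1$-entries. A $k$-cycle is a closed walk of $k$ edges with distinct vertices and distinct edges. *)

theory Defs
  imports Main
begin

text \<open>Elements of F_2^l are bool lists of length l (entry i = coordinate x_{i+1}).\<close>
definition F2vec :: "nat \<Rightarrow> bool list set" where
  "F2vec l = {v. length v = l}"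

definition vadd :: "bool list \<Rightarrow> bool list \<Rightarrow> bool list" where
  "vadd x y = map2 (\<noteq>) x y"

text \<open>Index of a vector (0-based): x corresponds to row/column sum_i x_i 2^(i-1)
  (the paper's 1-based index minus one).\<close>
definition vidx :: "bool list \<Rightarrow> nat" where
  "vidx v = (\<Sum>i<length v. if v ! i then 2 ^ i else 0)"

text \<open>Binary matrices: number of rows, number of columns, entries (True = 1),
  indices 0-based.\<close>
record bmat =
  nrows :: nat
  ncols :: nat
  entry :: "nat \<Rightarrow> nat \<Rightarrow> bool"

definition Pmat :: "nat \<Rightarrow> bool list \<Rightarrow> bmat" where
  "Pmat l a = \<lparr> nrows = 2 ^ l, ncols = 2 ^ l,
     entry = (\<lambda>r c. \<exists>x\<in>F2vec l. \<exists>y\<in>F2vec l. vidx x = r \<and> vidx y = c \<and> y = vadd x a) \<rparr>"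

definition block_mat :: "nat \<Rightarrow> nat \<Rightarrow> nat \<Rightarrow> (nat \<Rightarrow> nat \<Rightarrow> bmat) \<Rightarrow> bmat" where
  "block_mat N nc nv B = \<lparr> nrows = nc * N, ncols = nv * N,
     entry = (\<lambda>r c. r < nc * N \<and> c < nv * N \<and>
                    entry (B (r div N) (c div N)) (r mod N) (c mod N)) \<rparr>"

definition QC_H :: "nat \<Rightarrow> nat \<Rightarrow> nat \<Rightarrow> (nat \<Rightarrow> nat \<Rightarrow> bool list) \<Rightarrow> bmat" where
  "QC_H l nc nv X = block_mat (2 ^ l) nc nv (\<lambda>h u. Pmat l (X h u))"

text \<open>Tanner graph: check nodes Inl r (rows), variable nodes Inr c (columns).\<close>
definition tanner_vertices :: "bmat \<Rightarrow> (nat + nat) set" where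
  "tanner_vertices M = Inl ` {..<nrows M} \<union> Inr ` {..<ncols M}"

definition tanner_adj :: "bmat \<Rightarrow> (nat + nat) \<Rightarrow> (nat + nat) \<Rightarrow> bool" where
  "tanner_adj M a b =
     ((\<exists>r c. a = Inl r \<and> b = Inr c \<and> r < nrows M \<and> c < ncols M \<and> entry M r c) \<or>
      (\<exists>r c. a = Inr c \<and> b = Inl r \<and> r < nrows M \<and> c < ncols M \<and> entry M r c))"

definition walk_edge :: "nat \<Rightarrow> 'v list \<Rightarrow> nat \<Rightarrow> 'v set" where
  "walk_edge k vs i = {vs ! i, vs ! ((i + 1) mod k)}"

definition is_k_cycle :: "('v \<Rightarrow> 'v \<Rightarrow> bool) \<Rightarrow> nat \<Rightarrow> 'v list \<Rightarrow> bool" where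
  "is_k_cycle adj k vs =
     (k \<ge> 1 \<and> length vs = k \<and> distinct vs \<and>
      (\<forall>i<k. adj (vs ! i) (vs ! ((i + 1) mod k))) \<and>
      distinct (map (walk_edge k vs) [0..<k]))"

text \<open>Number of k-cycles: cycles counted as subgraphs, i.e. distinct edge sets of
  closed walks as above (independent of starting point and direction).\<close>
definition num_k_cycles :: "('v \<Rightarrow> 'v \<Rightarrow> bool) \<Rightarrow> nat \<Rightarrow> nat" where
  "num_k_cycles adj k =
     card {E. \<exists>vs. is_k_cycle adj k vs \<and> E = set (map (walk_edge k vs) [0..<k])}"

definition rho :: "nat \<Rightarrow> (nat \<Rightarrow> nat \<Rightarrow> bool list) \<Rightarrow> nat \<Rightarrow> nat \<Rightarrow> nat \<Rightarrow> nat \<Rightarrow> nat" where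
  "rho nv X h i j m = card {(u, u'). u < nv \<and> u' < nv \<and> u \<noteq> m \<and> u' \<noteq> m \<and> u \<noteq> u' \<and>
      vadd (vadd (X h u) (X i u)) (X i m) = vadd (vadd (X h u') (X j u')) (X j m)}"

end

theory Submission
  imports Defs
begin

text \<open>
  Write the row index of H as h * 2^l + vidx x and the column index as u * 2^l + vidx y. Then the
  Tanner graph of H is the 2^l-fold cover of the complete bipartite graph on nc checks and nv
  variables in which check (h, x) is adjacent to variable (u, y) iff x + y = x_{h,u}. Every vertex has
  exactly one neighbour in each block, so a 6-cycle meets three distinct block rows h < i < j and three
  distinct block columns. Starting from its check (h, x) it is determined by x and by the columns u, m
  and u' of its variables between the rows h and i, i and j, j and h, and walking from (h, x) around
  these blocks closes up iff x_{h,u} + x_{i,u} + x_{i,m} = x_{h,u'} + x_{j,u'} + x_{j,m}. Every x gives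
  such a cycle, whence the factor 2^l.
\<close>

section \<open>Cycles and graph embeddings\<close>

definition k_cycles :: "('v \<Rightarrow> 'v \<Rightarrow> bool) \<Rightarrow> nat \<Rightarrow> 'v set set set" where
  "k_cycles adj k = {E. \<exists>vs. is_k_cycle adj k vs \<and> E = set (map (walk_edge k vs) [0..<k])}"

lemma num_k_cycles_eq_card: "num_k_cycles adj k = card (k_cycles adj k)"
  by (simp add: num_k_cycles_def k_cycles_def)

lemma walk_edge_map:
  assumes "i < length vs"
  shows "walk_edge (length vs) (map f vs) i = f ` walk_edge (length vs) vs i"
proof -
  have "0 < length vs"
    using assms by linarith
  then have "Suc i mod length vs < length vs"
    by simp
  then show ?thesis
    using assms by (simp add: walk_edge_def)
qed

lemma walk_edges_map:
  assumes "length vs = k"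
  shows "set (map (walk_edge k (map f vs)) [0..<k]) = image f ` set (map (walk_edge k vs) [0..<k])"
  using assms walk_edge_map[of _ vs f] by auto

lemma walk_edge_subset:
  assumes "i < length vs"
  shows "walk_edge (length vs) vs i \<subseteq> set vs"
proof -
  have "0 < length vs"
    using assms by linarith
  then show ?thesis
    using assms by (simp add: walk_edge_def)
qed

lemma is_k_cycle_nodes:
  assumes "is_k_cycle adj k vs" "\<And>a b. adj a b \<Longrightarrow> a \<in> V"
  shows "set vs \<subseteq> V"
proof
  fix a assume "a \<in> set vs"
  then obtain i where "i < k" "a = vs ! i"
    using assms(1) by (auto simp: is_k_cycle_def in_set_conv_nth)
  then show "a \<in> V"
    using assms unfolding is_k_cycle_def by blast
qed

lemma k_cycles_subset_Pow:
  assumes "\<And>a b. adj a b \<Longrightarrow> a \<in> V"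
  shows "k_cycles adj k \<subseteq> Pow (Pow V)"
proof
  fix E assume "E \<in> k_cycles adj k"
  then obtain vs where vs: "is_k_cycle adj k vs" "E = set (map (walk_edge k vs) [0..<k])"
    by (auto simp: k_cycles_def)
  have "set vs \<subseteq> V"
    using is_k_cycle_nodes[OF vs(1)] assms by blast
  moreover have "length vs = k"
    using vs(1) by (simp add: is_k_cycle_def)
  ultimately show "E \<in> Pow (Pow V)"
    using vs(2) walk_edge_subset[of _ vs] by fastforce
qed

lemma is_k_cycle_map_iff:
  assumes f: "inj_on f V" and vs: "set vs \<subseteq> V"
    and adj: "\<And>a b. a \<in> V \<Longrightarrow> b \<in> V \<Longrightarrow> adj (f a) (f b) \<longleftrightarrow> adj' a b"
  shows "is_k_cycle adj k (map f vs) \<longleftrightarrow> is_k_cycle adj' k vs"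
proof (cases "length vs = k \<and> k \<ge> 1")
  case True
  have nth_V: "vs ! j \<in> V" if "j < k" for j
    using vs that True by auto
  have "map (walk_edge k (map f vs)) [0..<k] = map (image f) (map (walk_edge k vs) [0..<k])"
    using True walk_edge_map[of _ vs f] by simp
  moreover have "inj_on (image f) (set (map (walk_edge k vs) [0..<k]))"
    by (rule inj_on_subset[OF inj_on_image_Pow[OF f]]) (auto simp: walk_edge_def nth_V)
  ultimately have "distinct (map (walk_edge k (map f vs)) [0..<k]) \<longleftrightarrow>
      distinct (map (walk_edge k vs) [0..<k])"
    by (simp only: distinct_map[where f = "image f"]) simp
  moreover have "distinct (map f vs) \<longleftrightarrow> distinct vs"
    using inj_on_subset[OF f vs] by (simp add: distinct_map)
  moreover have "adj (map f vs ! i) (map f vs ! ((i + 1) mod k)) \<longleftrightarrow> adj' (vs ! i) (vs ! ((i + 1) mod k))"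
    if "i < k" for i
    using that True adj nth_V by simp
  ultimately show ?thesis
    using True by (simp add: is_k_cycle_def)
qed (auto simp: is_k_cycle_def)

lemma k_cycles_embedding:
  assumes f: "inj_on f V"
    and nodes: "\<And>a b. adj a b \<Longrightarrow> a \<in> f ` V" and nodes': "\<And>a b. adj' a b \<Longrightarrow> a \<in> V"
    and adj: "\<And>a b. a \<in> V \<Longrightarrow> b \<in> V \<Longrightarrow> adj (f a) (f b) \<longleftrightarrow> adj' a b"
  shows "k_cycles adj k = image (image f) ` k_cycles adj' k"
    and "inj_on (image (image f)) (k_cycles adj' k)"
proof -
  have "k_cycles adj k \<subseteq> image (image f) ` k_cycles adj' k"
  proof
    fix E assume "E \<in> k_cycles adj k"
    then obtain ws where ws: "is_k_cycle adj k ws" "E = set (map (walk_edge k ws) [0..<k])"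
      by (auto simp: k_cycles_def)
    define vs where "vs = map (inv_into V f) ws"
    have "set ws \<subseteq> f ` V"
      using is_k_cycle_nodes[OF ws(1)] nodes by blast
    then have ws_vs: "ws = map f vs" and vs: "set vs \<subseteq> V"
      by (auto simp: vs_def f_inv_into_f inv_into_into intro!: map_idI[symmetric])
    then have "is_k_cycle adj' k vs"
      using ws(1) is_k_cycle_map_iff[where adj = adj and adj' = adj', OF f vs adj] by simp
    moreover have "E = image f ` set (map (walk_edge k vs) [0..<k])"
      using ws walk_edges_map[of vs k f] by (simp add: ws_vs is_k_cycle_def)
    ultimately show "E \<in> image (image f) ` k_cycles adj' k"
      unfolding k_cycles_def by blast
  qed
  moreover have "image (image f) ` k_cycles adj' k \<subseteq> k_cycles adj k"
  proof
    fix E assume "E \<in> image (image f) ` k_cycles adj' k"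
    then obtain vs where vs: "is_k_cycle adj' k vs" "E = image f ` set (map (walk_edge k vs) [0..<k])"
      by (auto simp: k_cycles_def)
    have "set vs \<subseteq> V"
      using is_k_cycle_nodes[OF vs(1)] nodes' by blast
    then have "is_k_cycle adj k (map f vs)"
      using vs(1) is_k_cycle_map_iff[where adj = adj and adj' = adj', OF f _ adj] by blast
    moreover have "E = set (map (walk_edge k (map f vs)) [0..<k])"
      using vs walk_edges_map[of vs k f] by (simp add: is_k_cycle_def)
    ultimately show "E \<in> k_cycles adj k"
      unfolding k_cycles_def by blast
  qed
  ultimately show "k_cycles adj k = image (image f) ` k_cycles adj' k"
    by blast
  show "inj_on (image (image f)) (k_cycles adj' k)"
    using inj_on_subset[OF inj_on_image_Pow[OF inj_on_image_Pow[OF f]] k_cycles_subset_Pow[OF nodes']] .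
qed

definition hexagon :: "'v \<Rightarrow> 'v \<Rightarrow> 'v \<Rightarrow> 'v \<Rightarrow> 'v \<Rightarrow> 'v \<Rightarrow> 'v set set" where
  "hexagon a b c d e g = {{a, b}, {b, c}, {c, d}, {d, e}, {e, g}, {g, a}}"

lemma hexagon_rotate: "hexagon a b c d e g = hexagon b c d e g a"
  by (simp add: hexagon_def insert_commute)

lemma Union_hexagon: "\<Union> (hexagon a b c d e g) = {a, b, c, d, e, g}"
  by (auto simp: hexagon_def)

lemma is_k_cycle_6_iff:
  "is_k_cycle adj 6 [a, b, c, d, e, g] \<longleftrightarrow> distinct [a, b, c, d, e, g] \<and>
     adj a b \<and> adj b c \<and> adj c d \<and> adj d e \<and> adj e g \<and> adj g a"
  and walk_edges_6: "set (map (walk_edge 6 [a, b, c, d, e, g]) [0..<6]) = hexagon a b c d e g"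
proof -
  have six: "(6::nat) = Suc (Suc (Suc (Suc (Suc (Suc 0)))))"
    by simp
  have all6: "(\<forall>i<6. P i) \<longleftrightarrow> P 0 \<and> P 1 \<and> P 2 \<and> P 3 \<and> P 4 \<and> P (5::nat)" for P
    unfolding six All_less_Suc by (simp add: conj_ac numeral_eq_Suc)
  have upt6: "[0..<6] = [0, 1, 2, 3, 4, 5::nat]"
    by (simp add: numeral_eq_Suc)
  have "distinct [a, b, c, d, e, g] \<Longrightarrow> distinct [{a, b}, {b, c}, {c, d}, {d, e}, {e, g}, {g, a}]"
    by (simp add: doubleton_eq_iff) blast
  moreover have "is_k_cycle adj 6 [a, b, c, d, e, g] \<longleftrightarrow> distinct [a, b, c, d, e, g] \<and>
     adj a b \<and> adj b c \<and> adj c d \<and> adj d e \<and> adj e g \<and> adj g a \<and>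
     distinct [{a, b}, {b, c}, {c, d}, {d, e}, {e, g}, {g, a}]"
    unfolding is_k_cycle_def all6 upt6 walk_edge_def by simp
  ultimately show "is_k_cycle adj 6 [a, b, c, d, e, g] \<longleftrightarrow> distinct [a, b, c, d, e, g] \<and>
     adj a b \<and> adj b c \<and> adj c d \<and> adj d e \<and> adj e g \<and> adj g a"
    by blast
  show "set (map (walk_edge 6 [a, b, c, d, e, g]) [0..<6]) = hexagon a b c d e g"
    unfolding upt6 walk_edge_def hexagon_def by simp
qed

lemma k_cycles_6:
  "k_cycles adj 6 = {hexagon a b c d e g | a b c d e g. distinct [a, b, c, d, e, g] \<and>
     adj a b \<and> adj b c \<and> adj c d \<and> adj d e \<and> adj e g \<and> adj g a}"
    (is "_ = ?H")
proof (intro equalityI subsetI)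
  fix E assume "E \<in> k_cycles adj 6"
  then obtain vs where vs: "is_k_cycle adj 6 vs" "E = set (map (walk_edge 6 vs) [0..<6])"
    by (auto simp: k_cycles_def)
  then have "length vs = 6"
    by (simp add: is_k_cycle_def)
  then obtain a b c d e g where "vs = [a, b, c, d, e, g]"
    by (clarsimp simp: length_Suc_conv numeral_eq_Suc)
  with vs have "is_k_cycle adj 6 [a, b, c, d, e, g]" "E = hexagon a b c d e g"
    by (simp_all only: walk_edges_6)
  then show "E \<in> ?H"
    unfolding is_k_cycle_6_iff by blast
next
  fix E assume "E \<in> ?H"
  then obtain a b c d e g where "E = hexagon a b c d e g" "is_k_cycle adj 6 [a, b, c, d, e, g]"
    unfolding is_k_cycle_6_iff by blast
  then show "E \<in> k_cycles adj 6"
    unfolding k_cycles_def walk_edges_6[symmetric] by blast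
qed

lemma sorted_triple_eq:
  fixes p1 p2 p3 p1' p2' p3' :: "'a::linorder \<times> 'b"
  assumes "{p1, p2, p3} = {p1', p2', p3'}"
    and "fst p1 < fst p2" "fst p2 < fst p3" "fst p1' < fst p2'" "fst p2' < fst p3'"
  shows "p1 = p1' \<and> p2 = p2' \<and> p3 = p3'"
proof -
  have "p1 \<in> {p1', p2', p3'}" "p2 \<in> {p1', p2', p3'}" "p3 \<in> {p1', p2', p3'}"
    "p1' \<in> {p1, p2, p3}" "p2' \<in> {p1, p2, p3}" "p3' \<in> {p1, p2, p3}"
    using assms(1) by blast+
  then show ?thesis
    using assms(2-) by auto
qed

lemma Inl_edge_in_hexagon:
  "{Inl p, Inr q} \<in> hexagon (Inl p1) (Inr q1) (Inl p2) (Inr q2) (Inl p3) (Inr q3) \<longleftrightarrow>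
     p = p1 \<and> q = q1 \<or> p = p2 \<and> q = q1 \<or> p = p2 \<and> q = q2 \<or> p = p3 \<and> q = q2 \<or>
     p = p3 \<and> q = q3 \<or> p = p1 \<and> q = q3"
  by (auto simp: hexagon_def doubleton_eq_iff)

lemma vimage_Inl_hexagon:
  "Inl -` \<Union> (hexagon (Inl p1) (Inr q1) (Inl p2) (Inr q2) (Inl p3) (Inr q3)) = {p1, p2, p3}"
  by (auto simp: Union_hexagon)

lemma hexagon_alternating_eq:
  fixes p1 p2 p3 p1' p2' p3' :: "'a::linorder \<times> 'b"
  assumes eq: "hexagon (Inl p1) (Inr q1) (Inl p2) (Inr q2) (Inl p3) (Inr q3) =
      hexagon (Inl p1') (Inr q1') (Inl p2') (Inr q2') (Inl p3') (Inr q3')"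
    and sorted: "fst p1 < fst p2" "fst p2 < fst p3" "fst p1' < fst p2'" "fst p2' < fst p3'"
    and q: "distinct [q1, q2, q3]"
  shows "p1' = p1 \<and> p2' = p2 \<and> p3' = p3 \<and> q1' = q1 \<and> q2' = q2 \<and> q3' = q3"
proof -
  have "{p1, p2, p3} = {p1', p2', p3'}"
    using arg_cong[where f = "\<lambda>H. Inl -` \<Union> H", OF eq] by (simp only: vimage_Inl_hexagon)
  then have p: "p1' = p1" "p2' = p2" "p3' = p3"
    using sorted_triple_eq sorted by metis+
  have "p1 \<noteq> p2" "p2 \<noteq> p3" "p1 \<noteq> p3"
    using sorted by auto
  moreover have "{Inl p, Inr q} \<in> hexagon (Inl p1) (Inr q1) (Inl p2) (Inr q2) (Inl p3) (Inr q3)"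
    if "{Inl p, Inr q} \<in> hexagon (Inl p1) (Inr q1') (Inl p2) (Inr q2') (Inl p3) (Inr q3')" for p q
    using that eq unfolding p by simp
  ultimately show ?thesis
    using q p unfolding Inl_edge_in_hexagon by (metis distinct_length_2_or_more)
qed

lemma mem_F2vec [simp]: "x \<in> F2vec l \<longleftrightarrow> length x = l"
  by (simp add: F2vec_def)

lemma finite_F2vec: "finite (F2vec l)"
  and card_F2vec: "card (F2vec l) = 2 ^ l"
  using finite_lists_length_eq[of "UNIV :: bool set" l] card_lists_length_eq[of "UNIV :: bool set" l]
  by (simp_all add: F2vec_def)

lemma vidx_Nil [simp]: "vidx [] = 0"
  by (simp add: vidx_def)

lemma vidx_Cons: "vidx (b # v) = (if b then 1 else 0) + 2 * vidx v"
  unfolding vidx_def length_Cons sum.lessThan_Suc_shift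
  by (auto simp: sum_distrib_left intro!: sum.cong)

lemma vidx_less: "vidx v < 2 ^ length v"
  by (induction v) (auto simp: vidx_Cons)

lemma inj_on_vidx: "inj_on vidx (F2vec l)"
proof -
  have "v = w" if "length v = length w" "vidx v = vidx w" for v w
    using that
  proof (induction v arbitrary: w)
    case (Cons b v)
    then obtain c w' where "w = c # w'"
      by (cases w) auto
    with Cons show ?case
      by (auto simp: vidx_Cons split: if_splits) presburger+
  qed simp
  then show ?thesis
    by (auto intro: inj_onI)
qed

lemma bij_betw_vidx: "bij_betw vidx (F2vec l) {..<2 ^ l}"
proof -
  have "vidx ` F2vec l \<subseteq> {..<2 ^ l}"
    using vidx_less by auto
  moreover have "card (vidx ` F2vec l) = card {..<(2::nat) ^ l}"
    by (simp add: card_image[OF inj_on_vidx] card_F2vec)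
  ultimately show ?thesis
    by (simp add: bij_betw_def inj_on_vidx card_subset_eq)
qed

lemma length_vadd [simp]: "length (vadd x y) = min (length x) (length y)"
  by (simp add: vadd_def)

lemma nth_vadd [simp]: "k < length x \<Longrightarrow> k < length y \<Longrightarrow> vadd x y ! k = (x ! k \<noteq> y ! k)"
  by (simp add: vadd_def)

lemma vadd_commute: "vadd x y = vadd y x"
  by (auto simp: list_eq_iff_nth_eq)

lemma vadd_assoc: "vadd (vadd x y) z = vadd x (vadd y z)"
  by (auto simp: list_eq_iff_nth_eq)

lemma vadd_vadd_same: "length x = length y \<Longrightarrow> vadd x (vadd x y) = y"
  by (auto simp: list_eq_iff_nth_eq)

lemma vadd_right_cancel:
  "length x = length y \<Longrightarrow> length x' = length y \<Longrightarrow> vadd x y = vadd x' y \<Longrightarrow> x = x'"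
  by (auto simp: list_eq_iff_nth_eq)

lemma vadd_telescope:
  "length y = length x \<Longrightarrow> length z = length x \<Longrightarrow> vadd (vadd x y) (vadd y z) = vadd x z"
  by (auto simp: list_eq_iff_nth_eq)

lemma vadd_eq_iff: "length x = length a \<Longrightarrow> length y = length a \<Longrightarrow> vadd x y = a \<longleftrightarrow> y = vadd x a"
  using vadd_vadd_same by metis

section \<open>The Tanner graph of H as a cover graph\<close>

definition block_index :: "nat \<Rightarrow> nat \<times> bool list \<Rightarrow> nat" where
  "block_index l p = fst p * 2 ^ l + vidx (snd p)"

lemma block_index_div_mod:
  assumes "x \<in> F2vec l"
  shows "block_index l (h, x) div 2 ^ l = h" and "block_index l (h, x) mod 2 ^ l = vidx x"
  using vidx_less[of x] assms by (simp_all add: block_index_def)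

lemma block_index_less_iff:
  assumes "x \<in> F2vec l"
  shows "block_index l (h, x) < n * 2 ^ l \<longleftrightarrow> h < n"
proof
  assume "block_index l (h, x) < n * 2 ^ l"
  then show "h < n"
    using less_mult_imp_div_less block_index_div_mod(1)[OF assms] by metis
next
  assume "h < n"
  then have "(h + 1) * 2 ^ l \<le> n * 2 ^ l"
    by (intro mult_le_mono1) simp
  then show "block_index l (h, x) < n * 2 ^ l"
    using vidx_less[of x] assms by (simp add: block_index_def)
qed

lemma inj_on_block_index: "inj_on (block_index l) (UNIV \<times> F2vec l)"
proof (rule inj_onI, clarify)
  fix h x h' x'
  assume x: "x \<in> F2vec l" "x' \<in> F2vec l" and eq: "block_index l (h, x) = block_index l (h', x')"
  then have "h = h'" and "vidx x = vidx x'"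
    using block_index_div_mod by metis+
  then show "h = h' \<and> x = x'"
    using inj_on_vidx[THEN inj_onD] x by blast
qed

lemma lessThan_subset_block_index_image: "{..<n * 2 ^ l} \<subseteq> block_index l ` ({..<n} \<times> F2vec l)"
proof
  fix r assume r: "r \<in> {..<n * 2 ^ l}"
  have "r mod 2 ^ l \<in> vidx ` F2vec l"
    using bij_betw_vidx[of l, THEN bij_betw_imp_surj_on] by simp
  then obtain x where x: "x \<in> F2vec l" "vidx x = r mod 2 ^ l"
    by (metis imageE)
  have "r = block_index l (r div 2 ^ l, x)"
    by (simp add: block_index_def x(2) div_mult_mod_eq)
  moreover have "r div 2 ^ l < n"
    using r by (simp add: less_mult_imp_div_less)
  ultimately show "r \<in> block_index l ` ({..<n} \<times> F2vec l)"
    using x(1) by blast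
qed

lemma entry_Pmat_vidx:
  assumes "x \<in> F2vec l" "y \<in> F2vec l"
  shows "entry (Pmat l a) (vidx x) (vidx y) \<longleftrightarrow> y = vadd x a"
proof -
  have unique: "(\<exists>v\<in>F2vec l. vidx v = vidx w \<and> P v) \<longleftrightarrow> P w" if "w \<in> F2vec l" for w P
    using inj_onD[OF inj_on_vidx, of _ w l] that by blast
  have "entry (Pmat l a) (vidx x) (vidx y) \<longleftrightarrow>
      (\<exists>v\<in>F2vec l. vidx v = vidx x \<and> (\<exists>w\<in>F2vec l. vidx w = vidx y \<and> w = vadd v a))"
    unfolding Pmat_def bmat.simps by blast
  then show ?thesis
    by (simp only: unique assms)
qed

lemma nrows_QC_H [simp]: "nrows (QC_H l nc nv X) = nc * 2 ^ l"
  and ncols_QC_H [simp]: "ncols (QC_H l nc nv X) = nv * 2 ^ l"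
  by (simp_all add: QC_H_def block_mat_def)

lemma entry_QC_H_block_index:
  assumes "x \<in> F2vec l" "y \<in> F2vec l"
  shows "entry (QC_H l nc nv X) (block_index l (h, x)) (block_index l (u, y)) \<longleftrightarrow>
           h < nc \<and> u < nv \<and> y = vadd x (X h u)"
  using assms by (simp add: QC_H_def block_mat_def block_index_less_iff block_index_div_mod
      entry_Pmat_vidx)

lemma tanner_adj_sym: "tanner_adj M a b \<longleftrightarrow> tanner_adj M b a"
  by (auto simp: tanner_adj_def)

lemma tanner_adj_Inl_Inr:
  "tanner_adj M (Inl r) (Inr c) \<longleftrightarrow> r < nrows M \<and> c < ncols M \<and> entry M r c"
  and tanner_adj_Inl_Inl: "\<not> tanner_adj M (Inl r) (Inl r')"
  and tanner_adj_Inr_Inr: "\<not> tanner_adj M (Inr c) (Inr c')"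
  by (auto simp: tanner_adj_def)

type_synonym cover_node = "(nat \<times> bool list) + (nat \<times> bool list)"

abbreviation cover_nodes :: "nat \<Rightarrow> cover_node set" where
  "cover_nodes l \<equiv> (UNIV \<times> F2vec l) <+> (UNIV \<times> F2vec l)"

fun cover_adj :: "nat \<Rightarrow> nat \<Rightarrow> nat \<Rightarrow> (nat \<Rightarrow> nat \<Rightarrow> bool list) \<Rightarrow>
    cover_node \<Rightarrow> cover_node \<Rightarrow> bool" where
  "cover_adj l nc nv X (Inl (h, x)) (Inr (u, y)) \<longleftrightarrow>
     h < nc \<and> u < nv \<and> x \<in> F2vec l \<and> y \<in> F2vec l \<and> vadd x y = X h u"
| "cover_adj l nc nv X (Inr (u, y)) (Inl (h, x)) \<longleftrightarrow>
     h < nc \<and> u < nv \<and> x \<in> F2vec l \<and> y \<in> F2vec l \<and> vadd x y = X h u"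
| "cover_adj l nc nv X _ _ \<longleftrightarrow> False"

lemma cover_adj_sym: "cover_adj l nc nv X a b \<longleftrightarrow> cover_adj l nc nv X b a"
  by (cases a; cases b) auto

lemma cover_adj_nodes: "cover_adj l nc nv X a b \<Longrightarrow> a \<in> cover_nodes l"
  by (cases a; cases b) auto

lemma cover_adj_InlD: "cover_adj l nc nv X (Inl p) b \<Longrightarrow> \<exists>q. b = Inr q"
  and cover_adj_InrD: "cover_adj l nc nv X (Inr q) b \<Longrightarrow> \<exists>p. b = Inl p"
  by (cases b; auto)+

lemma cover_adj_rows_differ:
  assumes "cover_adj l nc nv X (Inl p) (Inr q)" "cover_adj l nc nv X (Inl p') (Inr q)" "p \<noteq> p'"
  shows "fst p \<noteq> fst p'"
  using assms by (cases p; cases p'; cases q) (auto, metis vadd_right_cancel)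

lemma cover_adj_cols_differ:
  assumes "cover_adj l nc nv X (Inl p) (Inr q)" "cover_adj l nc nv X (Inl p) (Inr q')" "q \<noteq> q'"
  shows "fst q \<noteq> fst q'"
  using assms by (cases p; cases q; cases q') (auto, metis vadd_right_cancel vadd_commute)

lemma tanner_adj_QC_H_nodes:
  assumes "tanner_adj (QC_H l nc nv X) a b"
  shows "a \<in> map_sum (block_index l) (block_index l) ` cover_nodes l"
proof -
  obtain r n where "r < n * 2 ^ l" and r: "a = Inl r \<or> a = Inr r"
    using assms unfolding tanner_adj_def by auto
  then obtain p where "p \<in> UNIV \<times> F2vec l" "r = block_index l p"
    using lessThan_subset_block_index_image[of n l] by blast
  with r show ?thesis
    by (metis InlI InrI image_eqI map_sum.simps)
qed

section \<open>Counting the hexagons of the cover graph\<close>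

lemma finite_increasing_triples: "finite {(h, i, j). h < i \<and> i < j \<and> j < (n::nat)}"
proof -
  have "{(h, i, j). h < i \<and> i < j \<and> j < n} \<subseteq> {..<n} \<times> {..<n} \<times> {..<n}"
    by auto
  then show ?thesis
    by (rule finite_subset) simp
qed

definition rho_pairs ::
    "nat \<Rightarrow> (nat \<Rightarrow> nat \<Rightarrow> bool list) \<Rightarrow> nat \<Rightarrow> nat \<Rightarrow> nat \<Rightarrow> nat \<Rightarrow> (nat \<times> nat) set" where
  "rho_pairs nv X h i j m = {(u, u'). u < nv \<and> u' < nv \<and> u \<noteq> m \<and> u' \<noteq> m \<and> u \<noteq> u' \<and>
      vadd (vadd (X h u) (X i u)) (X i m) = vadd (vadd (X h u') (X j u')) (X j m)}"

lemma rho_eq_card: "rho nv X h i j m = card (rho_pairs nv X h i j m)"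
  by (simp add: rho_def rho_pairs_def)

definition hexagon_params :: "nat \<Rightarrow> nat \<Rightarrow> nat \<Rightarrow> (nat \<Rightarrow> nat \<Rightarrow> bool list) \<Rightarrow>
    ((nat \<times> nat \<times> nat) \<times> nat \<times> (nat \<times> nat) \<times> bool list) set" where
  "hexagon_params l nc nv X = Sigma {(h, i, j). h < i \<and> i < j \<and> j < nc}
     (\<lambda>(h, i, j). Sigma {..<nv} (\<lambda>m. rho_pairs nv X h i j m \<times> F2vec l))"

lemma hexagon_params_iff:
  "((h, i, j), m, (u, u'), x) \<in> hexagon_params l nc nv X \<longleftrightarrow>
     h < i \<and> i < j \<and> j < nc \<and> m < nv \<and> u < nv \<and> u' < nv \<and> u \<noteq> m \<and> u' \<noteq> m \<and> u \<noteq> u' \<and>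
     vadd (vadd (X h u) (X i u)) (X i m) = vadd (vadd (X h u') (X j u')) (X j m) \<and> x \<in> F2vec l"
  by (auto simp: hexagon_params_def rho_pairs_def)

lemma card_hexagon_params:
  "card (hexagon_params l nc nv X) =
     2 ^ l * (\<Sum>(h, i, j) \<in> {(h, i, j). h < i \<and> i < j \<and> j < nc}. \<Sum>m<nv. rho nv X h i j m)"
proof -
  let ?T = "{(h, i, j). h < i \<and> i < j \<and> j < nc}"
  have fin_pairs: "finite (rho_pairs nv X h i j m)" for h i j m
    by (rule finite_subset[of _ "{..<nv} \<times> {..<nv}"]) (auto simp: rho_pairs_def)
  have card_fibre: "card (Sigma {..<nv} (\<lambda>m. rho_pairs nv X h i j m \<times> F2vec l)) =
      2 ^ l * (\<Sum>m<nv. rho nv X h i j m)" for h i j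
    by (simp add: fin_pairs finite_F2vec card_cartesian_product card_F2vec rho_eq_card
        sum_distrib_left mult.commute)
  have "card (hexagon_params l nc nv X) =
      (\<Sum>t\<in>?T. card ((\<lambda>(h, i, j). Sigma {..<nv} (\<lambda>m. rho_pairs nv X h i j m \<times> F2vec l)) t))"
    unfolding hexagon_params_def
    by (rule card_SigmaI[OF finite_increasing_triples]) (auto simp: fin_pairs finite_F2vec split: prod.splits)
  also have "\<dots> = (\<Sum>t\<in>?T. 2 ^ l * (\<lambda>(h, i, j). \<Sum>m<nv. rho nv X h i j m) t)"
    by (rule sum.cong) (auto simp: card_fibre split: prod.splits)
  finally show ?thesis
    by (simp add: sum_distrib_left)
qed

text \<open>
  The hexagon that leaves the check (h, x) through block column u, reaches block row i, leaves it
  through block column m and is closed through block row j and block column u'. Its only edge not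
  forced by the construction is the one between (m, y2) and (j, x3): it is an edge of the cover graph
  iff the condition defining rho_pairs holds.
\<close>
fun cover_hexagon ::
    "(nat \<Rightarrow> nat \<Rightarrow> bool list) \<Rightarrow> (nat \<times> nat \<times> nat) \<times> nat \<times> (nat \<times> nat) \<times> bool list \<Rightarrow>
    cover_node set set" where
  "cover_hexagon X ((h, i, j), m, (u, u'), x) =
     (let y1 = vadd x (X h u); x2 = vadd y1 (X i u); y2 = vadd x2 (X i m);
          y3 = vadd x (X h u'); x3 = vadd y3 (X j u')
      in hexagon (Inl (h, x)) (Inr (u, y1)) (Inl (i, x2)) (Inr (m, y2)) (Inl (j, x3)) (Inr (u', y3)))"

lemma inj_on_cover_hexagon: "inj_on (cover_hexagon X) (hexagon_params l nc nv X)"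
proof (rule inj_onI)
  fix p p' assume p: "p \<in> hexagon_params l nc nv X" and p': "p' \<in> hexagon_params l nc nv X"
    and eq: "cover_hexagon X p = cover_hexagon X p'"
  obtain h i j m u u' x where p_def: "p = ((h, i, j), m, (u, u'), x)"
    by (metis prod.exhaust)
  obtain h' i' j' m' v v' x' where p'_def: "p' = ((h', i', j'), m', (v, v'), x')"
    by (metis prod.exhaust)
  have "h < i" "i < j" "h' < i'" "i' < j'" "distinct [u, m, u']"
    using p p' by (auto simp: p_def p'_def hexagon_params_iff)
  then have "(h', x') = (h, x) \<and> v = u \<and> m' = m \<and> v' = u' \<and> i' = i \<and> j' = j"
    using hexagon_alternating_eq[OF eq[unfolded p_def p'_def cover_hexagon.simps Let_def]] by auto
  then show "p = p'"
    by (simp add: p_def p'_def)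
qed

context
  fixes l nc nv :: nat and X :: "nat \<Rightarrow> nat \<Rightarrow> bool list"
  assumes X_F2vec: "\<And>h u. h < nc \<Longrightarrow> u < nv \<Longrightarrow> X h u \<in> F2vec l"
begin

lemma tanner_adj_QC_H_block_index:
  assumes "x \<in> F2vec l" "y \<in> F2vec l"
  shows "tanner_adj (QC_H l nc nv X) (Inl (block_index l (h, x))) (Inr (block_index l (u, y))) \<longleftrightarrow>
           cover_adj l nc nv X (Inl (h, x)) (Inr (u, y))"
proof (cases "h < nc \<and> u < nv")
  case True
  then show ?thesis
    using assms X_F2vec[of h u]
    by (simp add: tanner_adj_Inl_Inr entry_QC_H_block_index block_index_less_iff vadd_eq_iff)
qed (use assms in \<open>auto simp: tanner_adj_Inl_Inr block_index_less_iff\<close>)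

lemma tanner_adj_QC_H_map_sum:
  assumes "a \<in> cover_nodes l" "b \<in> cover_nodes l"
  shows "tanner_adj (QC_H l nc nv X) (map_sum (block_index l) (block_index l) a)
           (map_sum (block_index l) (block_index l) b) \<longleftrightarrow> cover_adj l nc nv X a b"
proof -
  have check_var: "tanner_adj (QC_H l nc nv X) (Inl (block_index l p)) (Inr (block_index l q)) \<longleftrightarrow>
      cover_adj l nc nv X (Inl p) (Inr q)" if "p \<in> UNIV \<times> F2vec l" "q \<in> UNIV \<times> F2vec l" for p q
    using that tanner_adj_QC_H_block_index by (cases p; cases q) simp
  have var_check: "tanner_adj (QC_H l nc nv X) (Inr (block_index l q)) (Inl (block_index l p)) \<longleftrightarrow>
      cover_adj l nc nv X (Inr q) (Inl p)" if "p \<in> UNIV \<times> F2vec l" "q \<in> UNIV \<times> F2vec l" for p q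
    using check_var[OF that] tanner_adj_sym cover_adj_sym by metis
  show ?thesis
    using assms
    by (cases a; cases b) (auto simp: check_var var_check tanner_adj_Inl_Inl tanner_adj_Inr_Inr)
qed

lemma num_k_cycles_QC_H:
  "num_k_cycles (tanner_adj (QC_H l nc nv X)) k = card (k_cycles (cover_adj l nc nv X) k)"
proof -
  let ?V = "cover_nodes l" and ?f = "map_sum (block_index l) (block_index l)"
  have "inj_on ?f ?V"
  proof (rule inj_onI)
    fix a b assume "a \<in> ?V" "b \<in> ?V" "?f a = ?f b"
    then show "a = b"
      using inj_onD[OF inj_on_block_index] by auto
  qed
  then show ?thesis
    using k_cycles_embedding[where adj = "tanner_adj (QC_H l nc nv X)" and adj' = "cover_adj l nc nv X",
        OF _ tanner_adj_QC_H_nodes cover_adj_nodes tanner_adj_QC_H_map_sum]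
    by (simp add: num_k_cycles_eq_card card_image)
qed

lemma cover_hexagon_in_k_cycles:
  assumes "p \<in> hexagon_params l nc nv X"
  shows "cover_hexagon X p \<in> k_cycles (cover_adj l nc nv X) 6"
proof -
  obtain h i j m u u' x where p: "p = ((h, i, j), m, (u, u'), x)"
    by (metis prod.exhaust)
  have bounds: "h < i" "i < j" "j < nc" "m < nv" "u < nv" "u' < nv" "distinct [u, m, u']"
    and closed: "vadd (vadd (X h u) (X i u)) (X i m) = vadd (vadd (X h u') (X j u')) (X j m)"
    and x: "length x = l"
    using assms by (auto simp: p hexagon_params_iff)
  then have len: "length (X h u) = l" "length (X i u) = l" "length (X i m) = l"
    "length (X h u') = l" "length (X j u') = l" "length (X j m) = l"
    using X_F2vec by auto
  define y1 where "y1 = vadd x (X h u)"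
  define x2 where "x2 = vadd y1 (X i u)"
  define y2 where "y2 = vadd x2 (X i m)"
  define y3 where "y3 = vadd x (X h u')"
  define x3 where "x3 = vadd y3 (X j u')"
  have lens: "length y1 = l" "length x2 = l" "length y2 = l" "length y3 = l" "length x3 = l"
    using x len by (simp_all add: y1_def x2_def y2_def y3_def x3_def)
  have "y2 = vadd x3 (X j m)"
    using closed by (simp add: y2_def x2_def y1_def x3_def y3_def vadd_assoc)
  then have "vadd x3 y2 = X j m"
    using lens len by (simp add: vadd_vadd_same)
  moreover have "vadd x y1 = X h u" "vadd x2 y2 = X i m" "vadd x y3 = X h u'"
    using x len lens by (simp_all add: y1_def y2_def y3_def vadd_vadd_same)
  moreover have "vadd x2 y1 = X i u" "vadd x3 y3 = X j u'"
    using len lens by (simp_all add: x2_def x3_def vadd_commute[of _ y1] vadd_commute[of _ y3] vadd_vadd_same)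
  moreover have "distinct [Inl (h, x), Inr (u, y1), Inl (i, x2), Inr (m, y2), Inl (j, x3), Inr (u', y3)]"
    using bounds by auto
  ultimately show ?thesis
    unfolding p cover_hexagon.simps Let_def k_cycles_6
    using bounds x lens
    by (fold y1_def x2_def y2_def y3_def x3_def) (fastforce simp: cover_adj.simps)
qed

lemma cover_hexagon_image_sorted:
  assumes rows: "h1 < h2" "h2 < h3" and cols: "distinct [u1, u2, u3]"
    and adj: "cover_adj l nc nv X (Inl (h1, x1)) (Inr (u1, y1))" "cover_adj l nc nv X (Inl (h2, x2)) (Inr (u1, y1))"
      "cover_adj l nc nv X (Inl (h2, x2)) (Inr (u2, y2))" "cover_adj l nc nv X (Inl (h3, x3)) (Inr (u2, y2))"
      "cover_adj l nc nv X (Inl (h3, x3)) (Inr (u3, y3))" "cover_adj l nc nv X (Inl (h1, x1)) (Inr (u3, y3))"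
  shows "hexagon (Inl (h1, x1)) (Inr (u1, y1)) (Inl (h2, x2)) (Inr (u2, y2)) (Inl (h3, x3)) (Inr (u3, y3))
           \<in> cover_hexagon X ` hexagon_params l nc nv X"
proof -
  have bounds: "h3 < nc" "u1 < nv" "u2 < nv" "u3 < nv"
    and lens: "length x1 = l" "length x2 = l" "length x3 = l" "length y1 = l" "length y2 = l" "length y3 = l"
    and voltage: "vadd x1 y1 = X h1 u1" "vadd x2 y1 = X h2 u1" "vadd x2 y2 = X h2 u2"
      "vadd x3 y2 = X h3 u2" "vadd x3 y3 = X h3 u3" "vadd x1 y3 = X h1 u3"
    using adj by auto
  have walk: "y1 = vadd x1 (X h1 u1)" "x2 = vadd y1 (X h2 u1)" "y2 = vadd x2 (X h2 u2)"
    "y3 = vadd x1 (X h1 u3)" "x3 = vadd y3 (X h3 u3)"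
    using voltage lens by (metis vadd_vadd_same vadd_commute)+
  have "vadd (vadd (X h1 u1) (X h2 u1)) (X h2 u2) = vadd x1 y2"
    unfolding voltage[symmetric] using lens by (simp add: vadd_commute[of x2 y1] vadd_telescope)
  moreover have "vadd (vadd (X h1 u3) (X h3 u3)) (X h3 u2) = vadd x1 y2"
    unfolding voltage[symmetric] using lens by (simp add: vadd_commute[of x3 y3] vadd_telescope)
  ultimately have "((h1, h2, h3), u2, (u1, u3), x1) \<in> hexagon_params l nc nv X"
    using rows cols bounds lens by (auto simp: hexagon_params_iff)
  moreover have "cover_hexagon X ((h1, h2, h3), u2, (u1, u3), x1) =
      hexagon (Inl (h1, x1)) (Inr (u1, y1)) (Inl (h2, x2)) (Inr (u2, y2)) (Inl (h3, x3)) (Inr (u3, y3))"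
    by (simp add: walk Let_def)
  ultimately show ?thesis
    by (metis image_eqI)
qed

lemma cover_hexagon_image_any_order:
  assumes rows: "distinct [h1, h2, h3]" and cols: "distinct [u1, u2, u3]"
    and adj: "cover_adj l nc nv X (Inl (h1, x1)) (Inr (u1, y1))" "cover_adj l nc nv X (Inl (h2, x2)) (Inr (u1, y1))"
      "cover_adj l nc nv X (Inl (h2, x2)) (Inr (u2, y2))" "cover_adj l nc nv X (Inl (h3, x3)) (Inr (u2, y2))"
      "cover_adj l nc nv X (Inl (h3, x3)) (Inr (u3, y3))" "cover_adj l nc nv X (Inl (h1, x1)) (Inr (u3, y3))"
  shows "hexagon (Inl (h1, x1)) (Inr (u1, y1)) (Inl (h2, x2)) (Inr (u2, y2)) (Inl (h3, x3)) (Inr (u3, y3))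
           \<in> cover_hexagon X ` hexagon_params l nc nv X"
proof -
  let ?c1 = "Inl (h1, x1)" and ?c2 = "Inl (h2, x2)" and ?c3 = "Inl (h3, x3)"
  let ?v1 = "Inr (u1, y1)" and ?v2 = "Inr (u2, y2)" and ?v3 = "Inr (u3, y3)"
  have rotate: "hexagon ?c1 ?v1 ?c2 ?v2 ?c3 ?v3 = hexagon ?c2 ?v2 ?c3 ?v3 ?c1 ?v1"
    "hexagon ?c1 ?v1 ?c2 ?v2 ?c3 ?v3 = hexagon ?c3 ?v3 ?c1 ?v1 ?c2 ?v2"
    by (simp_all add: hexagon_def insert_commute)
  have reflect: "hexagon ?c1 ?v1 ?c2 ?v2 ?c3 ?v3 = hexagon ?c1 ?v3 ?c3 ?v2 ?c2 ?v1"
    "hexagon ?c1 ?v1 ?c2 ?v2 ?c3 ?v3 = hexagon ?c2 ?v1 ?c1 ?v3 ?c3 ?v2"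
    "hexagon ?c1 ?v1 ?c2 ?v2 ?c3 ?v3 = hexagon ?c3 ?v2 ?c2 ?v1 ?c1 ?v3"
    by (simp_all add: hexagon_def insert_commute)
  consider "h1 < h2" "h2 < h3" | "h2 < h3" "h3 < h1" | "h3 < h1" "h1 < h2"
    | "h1 < h3" "h3 < h2" | "h2 < h1" "h1 < h3" | "h3 < h2" "h2 < h1"
    using rows by (simp add: neq_iff) linarith
  then show ?thesis
  proof cases
    case 1
    then show ?thesis
      using cols adj by (intro cover_hexagon_image_sorted) auto
  next
    case 2
    then show ?thesis
      unfolding rotate(1) using cols adj by (intro cover_hexagon_image_sorted) auto
  next
    case 3
    then show ?thesis
      unfolding rotate(2) using cols adj by (intro cover_hexagon_image_sorted) auto
  next
    case 4
    then show ?thesis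
      unfolding reflect(1) using cols adj by (intro cover_hexagon_image_sorted) auto
  next
    case 5
    then show ?thesis
      unfolding reflect(2) using cols adj by (intro cover_hexagon_image_sorted) auto
  next
    case 6
    then show ?thesis
      unfolding reflect(3) using cols adj by (intro cover_hexagon_image_sorted) auto
  qed
qed

lemma cover_hexagon_image_from_check:
  assumes dist: "distinct [Inl p1, b, c, d, e, g]"
    and adj: "cover_adj l nc nv X (Inl p1) b" "cover_adj l nc nv X b c" "cover_adj l nc nv X c d"
      "cover_adj l nc nv X d e" "cover_adj l nc nv X e g" "cover_adj l nc nv X g (Inl p1)"
  shows "hexagon (Inl p1) b c d e g \<in> cover_hexagon X ` hexagon_params l nc nv X"
proof -
  obtain q1 where b: "b = Inr q1"
    using adj(1) cover_adj_InlD by blast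
  obtain p2 where c: "c = Inl p2"
    using adj(2) b cover_adj_InrD by blast
  obtain q2 where d: "d = Inr q2"
    using adj(3) c cover_adj_InlD by blast
  obtain p3 where e: "e = Inl p3"
    using adj(4) d cover_adj_InrD by blast
  obtain q3 where g: "g = Inr q3"
    using adj(5) e cover_adj_InlD by blast
  have A: "cover_adj l nc nv X (Inl p1) (Inr q1)" "cover_adj l nc nv X (Inl p2) (Inr q1)"
    "cover_adj l nc nv X (Inl p2) (Inr q2)" "cover_adj l nc nv X (Inl p3) (Inr q2)"
    "cover_adj l nc nv X (Inl p3) (Inr q3)" "cover_adj l nc nv X (Inl p1) (Inr q3)"
    using adj cover_adj_sym unfolding b c d e g by metis+
  have "distinct [fst p1, fst p2, fst p3]"
    using cover_adj_rows_differ[OF A(1,2)] cover_adj_rows_differ[OF A(3,4)] cover_adj_rows_differ[OF A(6,5)]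
      dist by (auto simp: b c d e g)
  moreover have "distinct [fst q1, fst q2, fst q3]"
    using cover_adj_cols_differ[OF A(2,3)] cover_adj_cols_differ[OF A(4,5)] cover_adj_cols_differ[OF A(1,6)]
      dist by (auto simp: b c d e g)
  ultimately show ?thesis
    using A cover_hexagon_image_any_order unfolding b c d e g
    by (metis prod.collapse)
qed

lemma k_cycles_cover_adj_6: "k_cycles (cover_adj l nc nv X) 6 = cover_hexagon X ` hexagon_params l nc nv X"
proof (intro equalityI subsetI)
  fix H assume "H \<in> k_cycles (cover_adj l nc nv X) 6"
  then obtain a b c d e g where H: "H = hexagon a b c d e g" and dist: "distinct [a, b, c, d, e, g]"
    and adj: "cover_adj l nc nv X a b" "cover_adj l nc nv X b c" "cover_adj l nc nv X c d"
      "cover_adj l nc nv X d e" "cover_adj l nc nv X e g" "cover_adj l nc nv X g a"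
    unfolding k_cycles_6 by blast
  show "H \<in> cover_hexagon X ` hexagon_params l nc nv X"
  proof (cases a)
    case (Inl p)
    then show ?thesis
      using cover_hexagon_image_from_check dist adj unfolding H by blast
  next
    case (Inr q)
    then obtain p where "b = Inl p"
      using adj(1) cover_adj_InrD by blast
    moreover have "distinct [b, c, d, e, g, a]"
      using dist by auto
    ultimately show ?thesis
      using cover_hexagon_image_from_check adj unfolding H hexagon_rotate[of a] by blast
  qed
qed (use cover_hexagon_in_k_cycles in blast)

end

theorem mainTheorem14:
  fixes l nc nv :: nat and X :: "nat \<Rightarrow> nat \<Rightarrow> bool list"
  assumes "l \<ge> 1" and "nc \<ge> 1" and "nv \<ge> 1"
    and "\<And>h u. h < nc \<Longrightarrow> u < nv \<Longrightarrow> X h u \<in> F2vec l"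
  shows "num_k_cycles (tanner_adj (QC_H l nc nv X)) 6 =
           2 ^ l * (\<Sum>(h, i, j) \<in> {(h, i, j). h < i \<and> i < j \<and> j < nc}.
                      \<Sum>m<nv. rho nv X h i j m)
         \<and> (num_k_cycles (tanner_adj (QC_H l nc nv X)) 6 = 0 \<longleftrightarrow>
              (\<forall>h i j m. h < i \<and> i < j \<and> j < nc \<and> m < nv \<longrightarrow> rho nv X h i j m = 0))"
proof -
  let ?T = "{(h, i, j). h < i \<and> i < j \<and> j < nc}"
  have "num_k_cycles (tanner_adj (QC_H l nc nv X)) 6 = card (cover_hexagon X ` hexagon_params l nc nv X)"
    using num_k_cycles_QC_H k_cycles_cover_adj_6 assms(4) by metis
  also have "\<dots> = 2 ^ l * (\<Sum>(h, i, j) \<in> ?T. \<Sum>m<nv. rho nv X h i j m)"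
    by (simp add: card_image[OF inj_on_cover_hexagon] card_hexagon_params)
  finally have count: "num_k_cycles (tanner_adj (QC_H l nc nv X)) 6 = \<dots>" .
  then show ?thesis
    using finite_increasing_triples[of nc] by (auto simp: sum_eq_0_iff)
qed

end
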